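(* For every integer $n\ge 3$, $\Delta_n>0$; that is, Bob is strictly more likely than Alice to win the game with $n$ flips. Equivalently, the coefficient of $t^n$ in $f(t)=\frac12\big((1-t)(1-2t)(2t^2+t+1)\big)^{-1/2}-\frac12(1-t)^{-1}$ is strictly positive for all $n\ge3$.
   Context: A fair coin is flipped $n$ times, producing a sequence $x_1,\dots,x_n\in\{H,T\}$ of independent uniformly random outcomes. Alice's score is the number of indices $i\in\{1,\dots,n-1\}$ with $(x_i,x_{i+1})=(H,H)$; Bob's score is the number of indices $i\in\{1,\dots,n-1\}$ with $(x_i,x_{i+1})=(H,T)$. Let $P_n(\mathrm{Bob})$ be the probability that Bob's score is strictly larger than Alice's, $P_n(\mathrm{Alice})$ the probability that Alice's score is strictly larger than Bob's, and $\Delta_n=P_n(\mathrm{Bob})-P_n(\mathrm{Alice})$. The square root is the branch equal to $1$ at $t=0$. *)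

theory Defs
  imports Complex_Main
begin

text \<open>A coin sequence of length n is a bool list of length n; True = H, False = T.
  All 2^n sequences are equally likely (fair independent flips).\<close>

definition outcomes :: "nat \<Rightarrow> bool list set" where
  "outcomes n = {xs. length xs = n}"

definition alice_score :: "bool list \<Rightarrow> nat" where
  "alice_score xs = card {i. i + 1 < length xs \<and> xs ! i \<and> xs ! (i + 1)}"

definition bob_score :: "bool list \<Rightarrow> nat" where
  "bob_score xs = card {i. i + 1 < length xs \<and> xs ! i \<and> \<not> xs ! (i + 1)}"

definition P_Bob :: "nat \<Rightarrow> real" where
  "P_Bob n = real (card {xs \<in> outcomes n. bob_score xs > alice_score xs}) / 2 ^ n"

definition P_Alice :: "nat \<Rightarrow> real" where
  "P_Alice n = real (card {xs \<in> outcomes n. alice_score xs > bob_score xs}) / 2 ^ n"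

definition Delta :: "nat \<Rightarrow> real" where
  "Delta n = P_Bob n - P_Alice n"

end

theory Submission
  imports Defs
begin

text \<open>Let the lead of a sequence be Bob's score minus Alice's. Appending T to a sequence ending
  in H raises the lead by one, appending H to it lowers the lead by one, and every other extension
  leaves the lead unchanged. Hence, with X n d and Y n d the numbers of sequences of length n with
  lead d that do not end, resp. end, in H, the balance S n = #(lead > 0) - #(lead < 0) satisfies
  S (n+1) = 2 S n + Y n (-1) - Y n 1. From the recurrences for X and Y alone, Y n k is the k-fold
  iterated partial sum of m \<mapsto> Y m (-k); for k = 1 this gives Y (n+1) 1 = Y n 1 + Y n (-1).
  Therefore S n = Y n 1, which is nondecreasing and equals 1 at n = 3 (the sequence HTH).\<close>

fun iterated_sum :: "nat \<Rightarrow> (nat \<Rightarrow> 'a::comm_monoid_add) \<Rightarrow> nat \<Rightarrow> 'a" where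
  "iterated_sum 0 F n = F n"
| "iterated_sum (Suc k) F n = (\<Sum>j<n. iterated_sum k F j)"

lemma iterated_sum_at_0: "F 0 = 0 \<Longrightarrow> iterated_sum k F 0 = 0"
  by (cases k) auto

lemma iterated_sum_shift:
  "F 0 = 0 \<Longrightarrow> iterated_sum k F (Suc n) = iterated_sum k (\<lambda>m. F (Suc m)) n"
  by (induction k arbitrary: n)
    (simp_all del: sum.lessThan_Suc add: sum.lessThan_Suc_shift iterated_sum_at_0)

lemma iterated_sum_add:
  "iterated_sum k (\<lambda>m. F m + G m) n = iterated_sum k F n + iterated_sum k G n"
  by (induction k arbitrary: n) (auto simp: sum.distrib)

lemma iterated_sum_iterated_sum:
  "iterated_sum k (iterated_sum l F) n = iterated_sum (k + l) F n"
  by (induction k arbitrary: n) auto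

locale lead_recurrence =
  fixes X Y :: "nat \<Rightarrow> int \<Rightarrow> 'a::ab_group_add"
  assumes X_0: "d \<noteq> 0 \<Longrightarrow> X 0 d = 0"
    and Y_0: "Y 0 d = 0"
    and X_Suc: "X (Suc n) d = X n d + Y n (d - 1)"
    and Y_Suc: "Y (Suc n) d = X n d + Y n (d + 1)"
begin

lemma X_eq_sum: "d \<noteq> 0 \<Longrightarrow> X n d = (\<Sum>m<n. Y m (d - 1))"
  by (induction n) (simp_all add: X_0 X_Suc)

lemma Y_Suc_eq_sum: "d \<noteq> 0 \<Longrightarrow> Y (Suc n) d = (\<Sum>m<n. Y m (d - 1)) + Y n (d + 1)"
  by (simp add: Y_Suc X_eq_sum)

lemma Y_eq_iterated_sum: "Y n (int k) = iterated_sum k (\<lambda>m. Y m (- int k)) n"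
proof (induction n arbitrary: k rule: less_induct)
  case (less n)
  show ?case
  proof (cases "k = 0 \<or> n = 0")
    case True
    then show ?thesis by (auto simp: Y_0 iterated_sum_at_0)
  next
    case False
    then obtain j n' where k: "k = Suc j" and n: "n = Suc n'"
      by (metis not0_implies_Suc)
    have "Y n (int k) = (\<Sum>m<n'. Y m (int j)) + Y n' (int (Suc k))"
      using Y_Suc_eq_sum[of "int k" n'] by (simp add: k n add.commute)
    also have "\<dots> = (\<Sum>m<n'. iterated_sum j (\<lambda>i. Y i (- int j)) m)
        + iterated_sum (Suc k) (\<lambda>m. Y m (- int (Suc k))) n'"
      using less[of n' "Suc k"] less[of _ j] n by simp
    also have "\<dots> = iterated_sum k (\<lambda>m. Y m (1 - int k)) n'
        + iterated_sum k (iterated_sum 1 (\<lambda>m. Y m (- int k - 1))) n'"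
      by (simp add: iterated_sum_iterated_sum k)
    also have "\<dots> = iterated_sum k (\<lambda>m. Y (Suc m) (- int k)) n'"
      using Y_Suc_eq_sum[of "- int k"] False
      by (simp add: iterated_sum_add[symmetric] add.commute)
    also have "\<dots> = iterated_sum k (\<lambda>m. Y m (- int k)) n"
      by (simp add: n iterated_sum_shift Y_0)
    finally show ?thesis .
  qed
qed

lemma Y_Suc_1: "Y (Suc n) 1 = Y n 1 + Y n (-1)"
  using Y_eq_iterated_sum[of _ 1] by simp

end

definition adjacent_count :: "('a \<Rightarrow> 'a \<Rightarrow> bool) \<Rightarrow> 'a list \<Rightarrow> nat" where
  "adjacent_count p xs = card {i. i + 1 < length xs \<and> p (xs ! i) (xs ! (i + 1))}"

lemma adjacent_count_snoc:
  "adjacent_count p (xs @ [b]) = adjacent_count p xs + of_bool (xs \<noteq> [] \<and> p (last xs) b)"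
proof -
  let ?A = "{i. i + 1 < length xs \<and> p (xs ! i) (xs ! (i + 1))}"
  let ?B = "{i. i + 1 = length xs \<and> p (last xs) b}"
  have last: "xs ! i = last xs" if "i + 1 = length xs" for i
    using that by (cases xs rule: rev_cases) (simp_all add: nth_append)
  have "{i. i + 1 < length (xs @ [b]) \<and> p ((xs @ [b]) ! i) ((xs @ [b]) ! (i + 1))} = ?A \<union> ?B"
    by (auto simp: nth_append last)
  moreover have "card ?B = of_bool (xs \<noteq> [] \<and> p (last xs) b)"
  proof -
    have "?B = (if xs \<noteq> [] \<and> p (last xs) b then {length xs - 1} else {})"
      by auto
    then show ?thesis by simp
  qed
  moreover have "finite ?A" "finite ?B" "?A \<inter> ?B = {}"
    by (auto intro: finite_subset[of _ "{..length xs}"])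
  ultimately show ?thesis
    unfolding adjacent_count_def by (simp add: card_Un_disjoint)
qed

definition ends_heads :: "bool list \<Rightarrow> bool" where
  "ends_heads xs \<longleftrightarrow> xs \<noteq> [] \<and> last xs"

definition bob_lead :: "bool list \<Rightarrow> int" where
  "bob_lead xs = int (bob_score xs) - int (alice_score xs)"

lemma bob_lead_Nil: "bob_lead [] = 0"
  by (simp add: bob_lead_def alice_score_def bob_score_def)

lemma bob_lead_snoc:
  "bob_lead (xs @ [b]) = bob_lead xs + (if ends_heads xs then (if b then -1 else 1) else 0)"
proof -
  have "alice_score xs = adjacent_count (\<and>) xs"
    and "bob_score xs = adjacent_count (\<lambda>a b. a \<and> \<not> b) xs" for xs by (simp_all add: alice_score_def bob_score_def adjacent_count_def)
  then show ?thesis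
    by (simp add: bob_lead_def adjacent_count_snoc ends_heads_def)
qed

lemma ends_heads_snoc [simp]: "ends_heads (xs @ [b]) = b"
  by (simp add: ends_heads_def)

lemma outcomes_0: "outcomes 0 = {[]}"
  by (auto simp: outcomes_def)

lemma finite_outcomes: "finite (outcomes n)"
  using finite_lists_length_eq[of "UNIV :: bool set" n] by (simp add: outcomes_def)

lemma outcomes_Suc: "outcomes (Suc n) = (\<lambda>(xs, b). xs @ [b]) ` (outcomes n \<times> UNIV)"
proof -
  have "xs = butlast xs @ [last xs]" if "length xs = Suc n" for xs :: "bool list"
    using that by (metis append_butlast_last_id list.size(3) nat.distinct(1))
  then show ?thesis
    by (force simp: outcomes_def)
qed

lemma sum_outcomes_Suc:
  "(\<Sum>xs\<in>outcomes (Suc n). f xs) = (\<Sum>xs\<in>outcomes n. f (xs @ [True]) + f (xs @ [False]))"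
proof -
  have "inj_on (\<lambda>(xs, b). xs @ [b]) (outcomes n \<times> UNIV)"
    by (auto intro: inj_onI)
  then have "(\<Sum>xs\<in>outcomes (Suc n). f xs) = (\<Sum>(xs, b)\<in>outcomes n \<times> UNIV. f (xs @ [b]))"
    by (simp add: outcomes_Suc sum.reindex case_prod_beta')
  also have "\<dots> = (\<Sum>xs\<in>outcomes n. f (xs @ [True]) + f (xs @ [False]))"
    by (simp add: sum.cartesian_product[symmetric] finite_outcomes UNIV_bool add.commute)
  finally show ?thesis .
qed

definition lead_count :: "bool \<Rightarrow> nat \<Rightarrow> int \<Rightarrow> real" where
  "lead_count h n d = (\<Sum>xs\<in>outcomes n. of_bool (ends_heads xs = h \<and> bob_lead xs = d))"

lemma lead_count_nonneg: "lead_count h n d \<ge> 0"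
  by (simp add: lead_count_def sum_nonneg)

interpretation lead_counts: lead_recurrence "lead_count False" "lead_count True"
proof
  show "lead_count False 0 d = 0" if "d \<noteq> 0" for d
    using that by (simp add: lead_count_def outcomes_0 bob_lead_Nil)
  show "lead_count True 0 d = 0" for d
    by (simp add: lead_count_def outcomes_0 ends_heads_def)
  show "lead_count False (Suc n) d = lead_count False n d + lead_count True n (d - 1)" for n d
    unfolding lead_count_def sum_outcomes_Suc sum.distrib[symmetric]
    by (rule sum.cong) (auto simp: bob_lead_snoc)
  show "lead_count True (Suc n) d = lead_count False n d + lead_count True n (d + 1)" for n d
    unfolding lead_count_def sum_outcomes_Suc sum.distrib[symmetric]
    by (rule sum.cong) (auto simp: bob_lead_snoc)
qed

definition lead_balance :: "nat \<Rightarrow> real" where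
  "lead_balance n = (\<Sum>xs\<in>outcomes n. of_int (sgn (bob_lead xs)))"

lemma Delta_eq_lead_balance: "Delta n = lead_balance n / 2 ^ n"
proof -
  have "of_int (sgn (bob_lead xs))
      = of_bool (alice_score xs < bob_score xs) - (of_bool (bob_score xs < alice_score xs) :: real)"
    for xs by (simp add: bob_lead_def sgn_if)
  then have "lead_balance n = real (card {xs \<in> outcomes n. bob_score xs > alice_score xs})
      - real (card {xs \<in> outcomes n. alice_score xs > bob_score xs})"
    by (simp add: lead_balance_def sum_subtractf finite_outcomes Int_def conj_commute)
  then show ?thesis
    by (simp add: Delta_def P_Bob_def P_Alice_def diff_divide_distrib)
qed

lemma lead_balance_Suc:
  "lead_balance (Suc n) = 2 * lead_balance n + lead_count True n (-1) - lead_count True n 1"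
proof -
  have "of_int (sgn (bob_lead (xs @ [True]))) + of_int (sgn (bob_lead (xs @ [False])))
      = 2 * of_int (sgn (bob_lead xs))
        + of_bool (ends_heads xs \<and> bob_lead xs = -1) - (of_bool (ends_heads xs \<and> bob_lead xs = 1) :: real)"
    for xs by (auto simp: bob_lead_snoc sgn_if)
  then show ?thesis
    by (simp add: lead_balance_def lead_count_def sum_outcomes_Suc sum.distrib sum_subtractf
        sum_distrib_left)
qed

lemma lead_balance_eq_lead_count: "lead_balance n = lead_count True n 1"
proof (induction n)
  case 0
  show ?case by (simp add: lead_balance_def lead_count_def outcomes_0 bob_lead_Nil)
next
  case (Suc n)
  then show ?case by (simp add: lead_balance_Suc lead_counts.Y_Suc_1)
qed

lemma lead_count_True_1_ge_1: "n \<ge> 3 \<Longrightarrow> lead_count True n 1 \<ge> 1"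
proof (induction n rule: nat_induct_at_least)
  case base
  have "lead_count False 0 0 = 1"
    by (simp add: lead_count_def outcomes_0 bob_lead_Nil ends_heads_def)
  then have "1 = lead_count True 1 0"
    using lead_counts.Y_Suc[of 0 0] by (simp add: lead_counts.Y_0)
  also have "\<dots> \<le> lead_count False 2 1"
    using lead_counts.X_Suc[of 1 1] lead_count_nonneg[of False 1 1] by (simp add: numeral_eq_Suc)
  also have "\<dots> \<le> lead_count True 3 1"
    using lead_counts.Y_Suc[of 2 1] lead_count_nonneg[of True 2 2] by (simp add: numeral_eq_Suc)
  finally show ?case .
next
  case (Suc n)
  then show ?case
    using lead_counts.Y_Suc_1[of n] lead_count_nonneg[of True n "-1"] by simp
qed

theorem mainTheorem3:
  fixes n :: nat
  assumes "n \<ge> 3"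
  shows "Delta n > 0"
  using lead_count_True_1_ge_1[OF assms]
  by (simp add: Delta_eq_lead_balance lead_balance_eq_lead_count)

end
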